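(* Let $n\geq 2$, let $G$ be a group, and let $\mathbb{F}_n$ be the free group on $e_1,\dots,e_n$. Let $h:\mathbb{F}_n\to G$ be a map satisfying $h(x^{-1})=h(x)^{-1}$ and $h(xy)=h(y)h(x)$ for all $x,y\in\mathbb{F}_n$. Then for every braid $\beta\in\mathcal{B}_n$, $$h\big(\beta\bullet(e_1,\dots,e_n)\big)=\beta^{-1}\bullet\big(h(e_1),\dots,h(e_n)\big),$$ where for $(f_1,\dots,f_n)\in\mathbb{F}_n^n$ we write $h(f_1,\dots,f_n)=(h(f_1),\dots,h(f_n))$.
   Context: The braid group $\mathcal{B}_n$ is the group with generators $\beta_1,\dots,\beta_{n-1}$ and relations $\beta_i\beta_j\beta_i=\beta_j\beta_i\beta_j$ if $|i-j|=1$, $\beta_i\beta_j=\beta_j\beta_i$ if $|i-j|>1$. It acts on $\mathbb{F}_n$ by automorphisms $a_\beta$ determined by $a_{\beta_i}(e_i)=e_{i+1}$, $a_{\beta_i}(e_{i+1})=e_{i+1}e_ie_{i+1}^{-1}$, $a_{\beta_i}(e_j)=e_j$ for $j\notin\{i,i+1\}$; and $\beta\bullet(e_1,\dots,e_n)=(a_\beta(e_1),\dots,a_\beta(e_n))$. The braid group also acts (on the left) on $G^n$, the action being determined on generators by $\beta_i\bullet(x_1,\dots,x_{i-1},x_i,x_{i+1},x_{i+2},\dots,x_n)=(x_1,\dots,x_{i-1},x_ix_{i+1}x_i^{-1},x_i,x_{i+2},\dots,x_n)$. *)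

theory Defs
  imports "HOL-Algebra.Group"
begin

text \<open>A letter (False, j) stands for e_j, (True, j) for e_j^-1.\<close>
type_synonym fword = "(bool \<times> nat) list"

fun red :: "fword \<Rightarrow> fword" where
  "red [] = []"
| "red (x # xs) = (case red xs of
      [] \<Rightarrow> [x]
    | y # ys \<Rightarrow> (if fst x \<noteq> fst y \<and> snd x = snd y then ys else x # y # ys))"

definition winv :: "fword \<Rightarrow> fword" where
  "winv w = rev (map (\<lambda>(b, j). (\<not> b, j)) w)"

definition free_group :: "nat \<Rightarrow> fword monoid" where
  "free_group n = \<lparr> carrier = {w. red w = w \<and> (\<forall>x\<in>set w. snd x \<in> {1..n})},
                    mult = (\<lambda>u v. red (u @ v)),
                    one = [] \<rparr>"

definition gen :: "nat \<Rightarrow> fword" where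
  "gen j = [(False, j)]"

definition subst :: "(nat \<Rightarrow> fword) \<Rightarrow> fword \<Rightarrow> fword" where
  "subst \<sigma> w = red (concat (map (\<lambda>(b, j). if b then winv (\<sigma> j) else \<sigma> j) w))"

text \<open>A braid word is a list of letters; (False, i) stands for beta_i, (True, i) for beta_i^-1.\<close>
type_synonym bword = "(bool \<times> nat) list"

definition braid_inv :: "bword \<Rightarrow> bword" where
  "braid_inv w = rev (map (\<lambda>(b, i). (\<not> b, i)) w)"

definition gen_aut :: "bool \<times> nat \<Rightarrow> nat \<Rightarrow> fword" where
  "gen_aut g j = (case g of
      (False, i) \<Rightarrow> (if j = i then gen (i + 1)
                     else if j = i + 1 then [(False, i + 1), (False, i), (True, i + 1)]
                     else gen j)
    | (True, i) \<Rightarrow> (if j = i then [(True, i), (False, i + 1), (False, i)]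
                     else if j = i + 1 then gen i
                     else gen j))"

fun braid_aut :: "bword \<Rightarrow> nat \<Rightarrow> fword" where
  "braid_aut [] j = gen j"
| "braid_aut (g # \<gamma>) j = subst (gen_aut g) (braid_aut \<gamma> j)"

text \<open>Left action on G^n (tuples indexed by 1..n).\<close>
definition gen_act :: "('g, 'b) monoid_scheme \<Rightarrow> bool \<times> nat \<Rightarrow> (nat \<Rightarrow> 'g) \<Rightarrow> (nat \<Rightarrow> 'g)" where
  "gen_act G g x = (case g of
      (False, i) \<Rightarrow> x(i := x i \<otimes>\<^bsub>G\<^esub> x (i + 1) \<otimes>\<^bsub>G\<^esub> inv\<^bsub>G\<^esub> (x i), i + 1 := x i)
    | (True, i) \<Rightarrow> x(i := x (i + 1),
                     i + 1 := inv\<^bsub>G\<^esub> (x (i + 1)) \<otimes>\<^bsub>G\<^esub> x i \<otimes>\<^bsub>G\<^esub> x (i + 1)))"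

fun braid_act :: "('g, 'b) monoid_scheme \<Rightarrow> bword \<Rightarrow> (nat \<Rightarrow> 'g) \<Rightarrow> (nat \<Rightarrow> 'g)" where
  "braid_act G [] x = x"
| "braid_act G (g # \<gamma>) x = gen_act G g (braid_act G \<gamma> x)"

end

theory Submission
  imports Defs
begin

text \<open>Evaluating a word of the free group at a tuple x, reading it from right to left, is an
  anti-homomorphism. Any anti-homomorphism h on F_n agrees with this evaluation at the tuple
  (h e_1, ..., h e_n). Evaluating the substituted word a_g(e_k) at x gives the k-th entry of
  g^-1 \<bullet> x, so by induction on the braid word, evaluating a_\<beta>(e_k) gives the k-th
  entry of \<beta>^-1 \<bullet> x.\<close>

fun reduced :: "fword \<Rightarrow> bool" where
  "reduced [] = True"
| "reduced [a] = True"
| "reduced (a # b # w) = (\<not> (fst a \<noteq> fst b \<and> snd a = snd b) \<and> reduced (b # w))"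

lemma reduced_Cons_tl: "reduced (a # w) \<Longrightarrow> reduced w"
  by (cases w) auto

lemma reduced_red: "reduced (red w)"
  by (induction w) (auto split: list.splits dest: reduced_Cons_tl)

lemma red_reduced: "reduced w \<Longrightarrow> red w = w"
  by (induction w rule: reduced.induct) auto

lemma red_idem: "red (red w) = red w"
  by (simp add: red_reduced reduced_red)

lemma set_red_subset: "set (red w) \<subseteq> set w"
  by (induction w) (auto split: list.splits)

lemma carrier_free_group_iff:
  "w \<in> carrier (free_group n) \<longleftrightarrow> red w = w \<and> snd ` set w \<subseteq> {1..n}"
  by (auto simp: free_group_def)

lemma gen_in_free_group: "k \<in> {1..n} \<Longrightarrow> gen k \<in> carrier (free_group n)"
  by (simp add: carrier_free_group_iff gen_def)

lemma Cons_in_free_group_tl: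
  assumes "a # w \<in> carrier (free_group n)"
  shows "w \<in> carrier (free_group n)"
proof -
  have "red (a # w) = a # w" and range: "snd ` set (a # w) \<subseteq> {1..n}"
    using assms unfolding carrier_free_group_iff by blast+
  then have "reduced (a # w)"
    by (metis reduced_red)
  then have "red w = w"
    by (rule red_reduced[OF reduced_Cons_tl])
  with range show ?thesis
    unfolding carrier_free_group_iff by (simp del: red.simps)
qed

lemma snd_set_winv: "snd ` set (winv w) = snd ` set w"
  by (force simp: winv_def)

lemma subst_in_range:
  assumes "\<And>k. k \<in> {1..n} \<Longrightarrow> snd ` set (\<sigma> k) \<subseteq> {1..n}"
    and "snd ` set w \<subseteq> {1..n}"
  shows "snd ` set (subst \<sigma> w) \<subseteq> {1..n}"
proof -
  have "snd ` set (concat (map (\<lambda>(b, j). if b then winv (\<sigma> j) else \<sigma> j) w)) \<subseteq> {1..n}"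
  proof
    fix i assume "i \<in> snd ` set (concat (map (\<lambda>(b, j). if b then winv (\<sigma> j) else \<sigma> j) w))"
    then obtain b j where "(b, j) \<in> set w" "i \<in> snd ` set (if b then winv (\<sigma> j) else \<sigma> j)"
      by auto
    then have "j \<in> {1..n}" and "i \<in> snd ` set (\<sigma> j)"
      using assms(2) by (force, cases b, auto simp: snd_set_winv)
    then show "i \<in> {1..n}"
      using assms(1) by blast
  qed
  then show ?thesis
    unfolding subst_def using set_red_subset by blast
qed

lemma braid_aut_in_free_group:
  assumes "\<forall>(b, i)\<in>set \<beta>. 1 \<le> i \<and> i < n" and "k \<in> {1..n}"
  shows "braid_aut \<beta> k \<in> carrier (free_group n)"
  using assms(1)
proof (induction \<beta>)
  case Nil
  then show ?case using assms(2) by (simp add: gen_in_free_group)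
next
  case (Cons g \<beta>)
  then have "snd ` set (gen_aut g j) \<subseteq> {1..n}" if "j \<in> {1..n}" for j
    using that by (auto simp: gen_aut_def gen_def split: prod.splits bool.splits)
  moreover have "snd ` set (braid_aut \<beta> k) \<subseteq> {1..n}"
    using Cons by (simp add: carrier_free_group_iff)
  ultimately have "snd ` set (subst (gen_aut g) (braid_aut \<beta> k)) \<subseteq> {1..n}"
    by (rule subst_in_range)
  then show ?case
    by (simp add: carrier_free_group_iff subst_def red_idem)
qed

lemma braid_act_append: "braid_act G (u @ v) x = braid_act G u (braid_act G v x)"
  by (induction u) auto

lemma braid_inv_Cons: "braid_inv (g # \<gamma>) = braid_inv \<gamma> @ [(\<not> fst g, snd g)]"
  by (cases g) (simp add: braid_inv_def)

lemma braid_act_cong: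
  assumes "\<forall>(b, i)\<in>set \<beta>. 1 \<le> i \<and> i < n" and "\<And>k. k \<in> {1..n} \<Longrightarrow> x k = y k"
    and "k \<in> {1..n}"
  shows "braid_act G \<beta> x k = braid_act G \<beta> y k"
  using assms
proof (induction \<beta> arbitrary: k)
  case (Cons g \<beta>)
  obtain b i where g: "g = (b, i)" by force
  with Cons.prems have "i \<in> {1..n}" "i + 1 \<in> {1..n}" by auto
  with Cons show ?case
    by (auto simp: g gen_act_def split: bool.splits)
qed simp

definition letter_eval :: "('g, 'b) monoid_scheme \<Rightarrow> (nat \<Rightarrow> 'g) \<Rightarrow> bool \<times> nat \<Rightarrow> 'g" where
  "letter_eval G x a = (if fst a then inv\<^bsub>G\<^esub> (x (snd a)) else x (snd a))"

fun word_eval :: "('g, 'b) monoid_scheme \<Rightarrow> (nat \<Rightarrow> 'g) \<Rightarrow> fword \<Rightarrow> 'g" where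
  "word_eval G x [] = \<one>\<^bsub>G\<^esub>"
| "word_eval G x (a # w) = word_eval G x w \<otimes>\<^bsub>G\<^esub> letter_eval G x a"

context group
begin

lemma letter_eval_closed: "(\<And>k. x k \<in> carrier G) \<Longrightarrow> letter_eval G x a \<in> carrier G"
  by (simp add: letter_eval_def)

lemma word_eval_closed: "(\<And>k. x k \<in> carrier G) \<Longrightarrow> word_eval G x w \<in> carrier G"
  by (induction w) (auto simp: letter_eval_closed)

lemma word_eval_append:
  "(\<And>k. x k \<in> carrier G) \<Longrightarrow> word_eval G x (u @ v) = word_eval G x v \<otimes> word_eval G x u"
  by (induction u) (auto simp: word_eval_closed letter_eval_closed m_assoc)

lemma word_eval_red:
  assumes "\<And>k. x k \<in> carrier G"
  shows "word_eval G x (red w) = word_eval G x w"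
proof (induction w)
  case (Cons a w)
  show ?case
  proof (cases "red w")
    case (Cons b v)
    show ?thesis
    proof (cases "fst a \<noteq> fst b \<and> snd a = snd b")
      case True
      then have "letter_eval G x b \<otimes> letter_eval G x a = \<one>"
        using assms by (cases "fst a") (auto simp: letter_eval_def)
      moreover have "word_eval G x w = word_eval G x v \<otimes> letter_eval G x b"
        using Cons Cons.IH by simp
      ultimately show ?thesis
        using True Cons assms by (simp add: m_assoc word_eval_closed letter_eval_closed)
    qed (use Cons Cons.IH in auto)
  qed (use Cons.IH assms in \<open>simp add: letter_eval_closed\<close>)
qed simp

lemma word_eval_winv:
  assumes "\<And>k. x k \<in> carrier G"
  shows "word_eval G x (winv w) = inv (word_eval G x w)"
proof (induction w)
  case (Cons a w)
  have "winv (a # w) = winv w @ [(\<not> fst a, snd a)]"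
    by (cases a) (simp add: winv_def)
  with Cons assms show ?case
    by (simp add: word_eval_append letter_eval_def inv_mult_group word_eval_closed)
qed (simp add: winv_def)

lemma word_eval_subst:
  assumes "\<And>k. x k \<in> carrier G"
  shows "word_eval G x (subst \<sigma> w) = word_eval G (\<lambda>k. word_eval G x (\<sigma> k)) w"
proof -
  have "word_eval G x (concat (map (\<lambda>(b, j). if b then winv (\<sigma> j) else \<sigma> j) w))
      = word_eval G (\<lambda>k. word_eval G x (\<sigma> k)) w"
    by (induction w) (auto simp: word_eval_append assms word_eval_winv letter_eval_def)
  then show ?thesis
    unfolding subst_def by (simp add: word_eval_red assms)
qed

lemma word_eval_gen_aut:
  assumes "\<And>k. x k \<in> carrier G"
  shows "word_eval G x (gen_aut g k) = gen_act G (\<not> fst g, snd g) x k"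
  using assms
  by (cases g) (auto simp: gen_aut_def gen_act_def gen_def letter_eval_def m_assoc
      split: bool.splits)

lemma word_eval_braid_aut:
  assumes "\<And>k. x k \<in> carrier G"
  shows "word_eval G x (braid_aut \<beta> k) = braid_act G (braid_inv \<beta>) x k"
  using assms
proof (induction \<beta> arbitrary: x)
  case (Cons g \<gamma>)
  have act: "(\<lambda>k. word_eval G x (gen_aut g k)) = gen_act G (\<not> fst g, snd g) x"
    using word_eval_gen_aut Cons.prems by auto
  have "gen_act G (\<not> fst g, snd g) x k \<in> carrier G" for k
    using Cons.prems word_eval_closed by (metis act)
  with Cons.IH Cons.prems show ?case
    by (simp add: word_eval_subst act braid_inv_Cons braid_act_append)
qed (simp add: gen_def letter_eval_def braid_inv_def)

text \<open>The tuple is padded with \<one> outside 1..n, where h (gen k) need not lie in carrier G.\<close>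

lemma antihom_free_group_eq_word_eval:
  assumes h_closed: "h \<in> carrier (free_group n) \<rightarrow> carrier G"
    and h_inv: "\<forall>x\<in>carrier (free_group n). h (winv x) = inv (h x)"
    and h_mult: "\<forall>x\<in>carrier (free_group n). \<forall>y\<in>carrier (free_group n).
           h (x \<otimes>\<^bsub>free_group n\<^esub> y) = h y \<otimes> h x"
    and w: "w \<in> carrier (free_group n)"
  shows "h w = word_eval G (\<lambda>k. if k \<in> {1..n} then h (gen k) else \<one>) w"
  using w
proof (induction w)
  case Nil
  have nil: "[] \<in> carrier (free_group n)" and "[] \<otimes>\<^bsub>free_group n\<^esub> [] = []"
    by (simp_all add: carrier_free_group_iff free_group_def)
  then have "h [] \<otimes> h [] = h []"
    using h_mult by metis
  moreover have "h [] \<in> carrier G"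
    using h_closed nil by blast
  ultimately show ?case
    by (simp add: r_cancel_one)
next
  case (Cons a w)
  define x where "x = (\<lambda>k. if k \<in> {1..n} then h (gen k) else \<one>)"
  have a: "snd a \<in> {1..n}" "[a] \<in> carrier (free_group n)"
    using Cons.prems by (auto simp: carrier_free_group_iff)
  have w: "w \<in> carrier (free_group n)"
    using Cons.prems by (rule Cons_in_free_group_tl)
  have "[a] = (if fst a then winv (gen (snd a)) else gen (snd a))"
    by (cases a) (simp add: winv_def gen_def)
  then have letter: "h [a] = letter_eval G x a"
    using a h_inv gen_in_free_group by (simp add: letter_eval_def x_def)
  have "a # w = [a] \<otimes>\<^bsub>free_group n\<^esub> w"
    using Cons.prems by (simp add: free_group_def)
  then have "h (a # w) = h w \<otimes> h [a]"
    using h_mult a w by simp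
  with Cons.IH w letter show ?case
    by (simp add: x_def)
qed

end

theorem lemma6p4:
  fixes G :: "('g, 'b) monoid_scheme" and n :: nat and h :: "fword \<Rightarrow> 'g" and \<beta> :: bword
  assumes "n \<ge> 2"
    and "group G"
    and "h \<in> carrier (free_group n) \<rightarrow> carrier G"
    and "\<forall>x\<in>carrier (free_group n). h (winv x) = inv\<^bsub>G\<^esub> (h x)"
    and "\<forall>x\<in>carrier (free_group n). \<forall>y\<in>carrier (free_group n).
           h (x \<otimes>\<^bsub>free_group n\<^esub> y) = h y \<otimes>\<^bsub>G\<^esub> h x"
    and "\<forall>(b, i)\<in>set \<beta>. 1 \<le> i \<and> i < n"
  shows "\<forall>j\<in>{1..n}. h (braid_aut \<beta> j) = braid_act G (braid_inv \<beta>) (\<lambda>k. h (gen k)) j"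
proof
  interpret group G by fact
  define x where "x = (\<lambda>k. if k \<in> {1..n} then h (gen k) else \<one>\<^bsub>G\<^esub>)"
  have x_closed: "x k \<in> carrier G" for k
    using assms(3) gen_in_free_group by (auto simp: x_def)
  have braid_inv_range: "\<forall>(b, i)\<in>set (braid_inv \<beta>). 1 \<le> i \<and> i < n"
    using assms(6) by (auto simp: braid_inv_def)
  fix j assume j: "j \<in> {1..n}"
  have "h (braid_aut \<beta> j) = word_eval G x (braid_aut \<beta> j)"
    unfolding x_def using assms(3-5) braid_aut_in_free_group[OF assms(6) j]
    by (rule antihom_free_group_eq_word_eval)
  also have "\<dots> = braid_act G (braid_inv \<beta>) x j"
    using x_closed by (rule word_eval_braid_aut)
  also have "\<dots> = braid_act G (braid_inv \<beta>) (\<lambda>k. h (gen k)) j"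
    by (rule braid_act_cong[OF braid_inv_range _ j]) (simp add: x_def)
  finally show "h (braid_aut \<beta> j) = braid_act G (braid_inv \<beta>) (\<lambda>k. h (gen k)) j" .
qed

end
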